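(* Let $K=\{u\in L_1[0,1]: 0\le u\le 1 \text{ a.e.}\}$ with the norm $\|\cdot\|_1$, and define $T\colon K\to K$ a.e. on $[0,1]$ by $Tu(t)=\frac12u(t)\int_0^tu(s)\,ds$. Then $T$ is $\mathfrak{cm}$-nonexpansive: for all $n\in\mathbb{N}$, $v\in K$ and sequences $(u_i)_{i=1}^\infty\subset K$, $$\limsup_{i\to\infty}\sup_{A\subset\{1,\dots,n\}}\Big\|\sum_{k\in A}(Tu_{i+k}-Tv)\Big\|_1\le\limsup_{i\to\infty}\sup_{A\subset\{1,\dots,n\}}\Big\|\sum_{k\in A}(u_{i+k}-v)\Big\|_1.$$ *)

theory Defs
  imports "HOL-Analysis.Analysis"
begin

text \<open>Elements of L1[0,1] are represented by real functions on the reals; only their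
values on [0,1] (up to null sets) matter.\<close>

definition K01 :: "(real \<Rightarrow> real) set" where
  "K01 = {u. set_integrable lborel {0..1} u \<and>
              (AE t in lborel. t \<in> {0..1} \<longrightarrow> 0 \<le> u t \<and> u t \<le> 1)}"

definition norm1 :: "(real \<Rightarrow> real) \<Rightarrow> real" where
  "norm1 f = (LINT t:{0..1}|lborel. \<bar>f t\<bar>)"

definition Top :: "(real \<Rightarrow> real) \<Rightarrow> real \<Rightarrow> real" where
  "Top u t = 1/2 * u t * (LINT s:{0..t}|lborel. u s)"

end

theory Submission
  imports Defs
begin

text \<open>With U and V the primitives t \<mapsto> \<integral>_0^t of u and v, one has
  2 (T u - T v) = V (u - v) + u (U - V).  Summing over k \<in> A, the first part is pointwise at
  most |\<Sum>_A (u_k - v)| because |V| \<le> 1.  The second part combines the numbers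
  U_k(t) - V(t) with weights u_k(t) \<in> [0,1], so it is bounded by the largest
  |\<Sum>_B (U_k(t) - V(t))| with B \<subseteq> A; that is the integral of \<Sum>_B (u_k - v) over [0,t],
  hence at most the maximal norm M of the subset sums.  Integrating gives
  \<parallel>\<Sum>_A (T u_k - T v)\<parallel> \<le> (\<parallel>\<Sum>_A (u_k - v)\<parallel> + M) / 2 \<le> M, so the inequality already holds
  for each i, before taking the limsup.\<close>

lemma abs_sum_mult_le_if_subset_sums_bounded:
  fixes a d :: "'a \<Rightarrow> 'b :: linordered_idom"
  assumes "finite A" and "\<And>k. k \<in> A \<Longrightarrow> 0 \<le> a k \<and> a k \<le> 1"
    and "\<And>B. B \<subseteq> A \<Longrightarrow> \<bar>\<Sum>k\<in>B. d k\<bar> \<le> M"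
  shows "\<bar>\<Sum>k\<in>A. a k * d k\<bar> \<le> M"
proof -
  define P where "P = {k\<in>A. 0 \<le> d k}"
  define N where "N = {k\<in>A. d k < 0}"
  have "A = P \<union> N" "P \<inter> N = {}" "finite P" "finite N"
    using assms(1) by (auto simp: P_def N_def)
  then have split: "(\<Sum>k\<in>A. a k * d k) = (\<Sum>k\<in>P. a k * d k) + (\<Sum>k\<in>N. a k * d k)"
    by (simp add: sum.union_disjoint)
  have "0 \<le> (\<Sum>k\<in>P. a k * d k)"
    by (rule sum_nonneg) (use assms(2) in \<open>auto simp: P_def\<close>)
  moreover have "(\<Sum>k\<in>P. a k * d k) \<le> (\<Sum>k\<in>P. d k)"
    by (rule sum_mono) (use assms(2) in \<open>auto simp: P_def intro: mult_left_le_one_le\<close>)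
  moreover have "(\<Sum>k\<in>N. a k * d k) \<le> 0"
    by (rule sum_nonpos) (use assms(2) in \<open>auto simp: N_def mult_nonneg_nonpos\<close>)
  moreover have "(\<Sum>k\<in>N. d k) \<le> (\<Sum>k\<in>N. a k * d k)"
    by (rule sum_mono) (use assms(2) in \<open>auto simp: N_def mult_le_cancel_right2\<close>)
  moreover have "\<bar>\<Sum>k\<in>P. d k\<bar> \<le> M" "\<bar>\<Sum>k\<in>N. d k\<bar> \<le> M"
    using assms(3) by (auto simp: P_def N_def)
  ultimately show ?thesis
    unfolding split by (simp add: abs_le_iff)
qed

lemma
  fixes f :: "'i \<Rightarrow> 'a \<Rightarrow> 'b :: {banach, second_countable_topology}"
  assumes "\<And>k. k \<in> B \<Longrightarrow> set_integrable M A (f k)"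
  shows set_integrable_sum: "set_integrable M A (\<lambda>x. \<Sum>k\<in>B. f k x)"
    and set_integral_sum: "(LINT x:A|M. (\<Sum>k\<in>B. f k x)) = (\<Sum>k\<in>B. LINT x:A|M. f k x)"
proof -
  have indicator_sum: "(\<lambda>x. indicator A x *\<^sub>R (\<Sum>k\<in>B. f k x)) = (\<lambda>x. \<Sum>k\<in>B. indicator A x *\<^sub>R f k x)"
    by (simp add: scaleR_sum_right)
  have "\<And>k. k \<in> B \<Longrightarrow> integrable M (\<lambda>x. indicator A x *\<^sub>R f k x)"
    using assms unfolding set_integrable_def .
  then show "set_integrable M A (\<lambda>x. \<Sum>k\<in>B. f k x)"
    and "(LINT x:A|M. (\<Sum>k\<in>B. f k x)) = (\<Sum>k\<in>B. LINT x:A|M. f k x)"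
    unfolding set_integrable_def set_lebesgue_integral_def indicator_sum by auto
qed

lemma set_integral_abs_mono_set:
  fixes g :: "'a \<Rightarrow> real"
  assumes "set_integrable M B g" and "A \<in> sets M" and "A \<subseteq> B"
  shows "(LINT x:A|M. \<bar>g x\<bar>) \<le> (LINT x:B|M. \<bar>g x\<bar>)"
proof -
  have "set_integrable M B (\<lambda>x. \<bar>g x\<bar>)"
    using assms(1) by (rule set_integrable_abs)
  moreover from this have "set_integrable M A (\<lambda>x. \<bar>g x\<bar>)"
    using assms(2,3) by (rule set_integrable_subset)
  ultimately show ?thesis
    unfolding set_lebesgue_integral_def set_integrable_def
    by (intro integral_mono) (use assms(3) in \<open>auto simp: indicator_def\<close>)
qed

lemma abs_primitive_le_norm1:
  assumes "set_integrable lborel {0..1} f" and "t \<le> 1"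
  shows "\<bar>LINT s:{0..t}|lborel. f s\<bar> \<le> norm1 f"
proof -
  have "set_integrable lborel {0..t} f"
    using assms by (intro set_integrable_subset[OF assms(1)]) auto
  then have "\<bar>LINT s:{0..t}|lborel. f s\<bar> \<le> (LINT s:{0..t}|lborel. \<bar>f s\<bar>)"
    using set_integral_norm_bound by fastforce
  also have "\<dots> \<le> norm1 f"
    unfolding norm1_def using assms by (intro set_integral_abs_mono_set) auto
  finally show ?thesis .
qed

lemma norm1_le_set_integral:
  assumes "set_integrable lborel {0..1} g" and "AE t\<in>{0..1} in lborel. \<bar>f t\<bar> \<le> g t"
  shows "norm1 f \<le> (LINT t:{0..1}|lborel. g t)"
  unfolding norm1_def set_lebesgue_integral_def
proof (rule integral_mono_AE')
  show "integrable lborel (\<lambda>t. indicator {0..1} t *\<^sub>R g t)"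
    using assms(1) unfolding set_integrable_def .
  show "AE t in lborel. indicator {0..1} t *\<^sub>R \<bar>f t\<bar> \<le> indicator {0..1} t *\<^sub>R g t"
    "AE t in lborel. 0 \<le> indicator {0..1} t *\<^sub>R g t"
    using assms(2) by (auto elim!: eventually_mono simp: indicator_def)
qed

lemma norm1_le_one:
  assumes "u \<in> K01"
  shows "norm1 u \<le> 1"
proof -
  have "norm1 u \<le> (LINT t:{0..1::real}|lborel. 1)"
    using assms borel_integrable_atLeastAtMost'[OF continuous_on_const]
    by (intro norm1_le_set_integral) (auto simp: K01_def elim!: eventually_mono)
  then show ?thesis
    by (simp add: set_integral_const)
qed

lemma Top_diff:
  "Top w t - Top v t = 1/2 * ((LINT s:{0..t}|lborel. v s) * (w t - v t)
     + w t * ((LINT s:{0..t}|lborel. w s) - (LINT s:{0..t}|lborel. v s)))"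
  by (simp add: Top_def algebra_simps)

definition subset_sum_modulus :: "(nat \<Rightarrow> real \<Rightarrow> real) \<Rightarrow> (real \<Rightarrow> real) \<Rightarrow> nat set \<Rightarrow> real"
  where "subset_sum_modulus w v S = Max ((\<lambda>A. norm1 (\<lambda>t. \<Sum>k\<in>A. w k t - v t)) ` Pow S)"

lemma norm1_le_subset_sum_modulus:
  assumes "finite S" and "A \<subseteq> S"
  shows "norm1 (\<lambda>t. \<Sum>k\<in>A. w k t - v t) \<le> subset_sum_modulus w v S"
  unfolding subset_sum_modulus_def using assms by (intro Max_ge) auto

lemma abs_sum_primitive_diff_le_subset_sum_modulus:
  assumes "set_integrable lborel {0..1} v" and "\<And>k. set_integrable lborel {0..1} (w k)" and "finite S" and "B \<subseteq> S" and "t \<le> 1"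
  shows "\<bar>\<Sum>k\<in>B. (LINT s:{0..t}|lborel. w k s) - (LINT s:{0..t}|lborel. v s)\<bar>
    \<le> subset_sum_modulus w v S"
proof -
  have integrable: "set_integrable lborel X v" "set_integrable lborel X (w k)"
    if "X \<subseteq> {0..1}" "X \<in> sets lborel" for X k
    using assms(1,2) set_integrable_subset[OF _ that(2,1)] by auto
  have "{0..t} \<subseteq> {0..1}"
    using assms(5) by auto
  then have "(\<Sum>k\<in>B. (LINT s:{0..t}|lborel. w k s) - (LINT s:{0..t}|lborel. v s))
      = (LINT s:{0..t}|lborel. (\<Sum>k\<in>B. w k s - v s))"
    by (simp add: set_integral_sum integrable)
  also have "\<bar>\<dots>\<bar> \<le> norm1 (\<lambda>s. \<Sum>k\<in>B. w k s - v s)"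
    using assms(5) by (intro abs_primitive_le_norm1 set_integrable_sum set_integral_diff integrable) auto
  also have "\<dots> \<le> subset_sum_modulus w v S"
    using assms(3,4) by (rule norm1_le_subset_sum_modulus)
  finally show ?thesis .
qed

lemma abs_sum_Top_diff_le:
  assumes "v \<in> K01" and "\<And>k. w k \<in> K01" and "finite S" and "A \<subseteq> S" and "t \<in> {0..1}"
    and "\<And>k. k \<in> A \<Longrightarrow> 0 \<le> w k t \<and> w k t \<le> 1"
  shows "\<bar>\<Sum>k\<in>A. Top (w k) t - Top v t\<bar>
    \<le> 1/2 * (\<bar>\<Sum>k\<in>A. w k t - v t\<bar> + subset_sum_modulus w v S)"
proof -
  define V where "V = (LINT s:{0..t}|lborel. v s)"
  define W where "W k = (LINT s:{0..t}|lborel. w k s)" for k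
  have "(\<Sum>k\<in>A. Top (w k) t - Top v t) = (\<Sum>k\<in>A. 1/2 * (V * (w k t - v t) + w k t * (W k - V)))"
    by (simp add: Top_diff V_def W_def)
  also have "\<dots> = 1/2 * (V * (\<Sum>k\<in>A. w k t - v t) + (\<Sum>k\<in>A. w k t * (W k - V)))"
    by (simp only: sum_distrib_left[symmetric] sum.distrib)
  moreover have "\<bar>V\<bar> \<le> 1"
    using abs_primitive_le_norm1[of v t] norm1_le_one[OF assms(1)] assms(1,5)
    by (simp add: V_def K01_def)
  then have "\<bar>V * (\<Sum>k\<in>A. w k t - v t)\<bar> \<le> \<bar>\<Sum>k\<in>A. w k t - v t\<bar>"
    by (simp add: abs_mult mult_left_le_one_le)
  moreover have "\<bar>\<Sum>k\<in>A. w k t * (W k - V)\<bar> \<le> subset_sum_modulus w v S"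
    using assms finite_subset
    by (intro abs_sum_mult_le_if_subset_sums_bounded)
      (auto simp: V_def W_def K01_def intro!: abs_sum_primitive_diff_le_subset_sum_modulus)
  ultimately show ?thesis
    using abs_triangle_ineq[of "V * (\<Sum>k\<in>A. w k t - v t)" "\<Sum>k\<in>A. w k t * (W k - V)"]
    by (simp only: abs_mult) simp
qed

lemma norm1_sum_Top_diff_le_subset_sum_modulus:
  assumes "v \<in> K01" and "\<And>k. w k \<in> K01" and "finite S" and "A \<subseteq> S"
  shows "norm1 (\<lambda>t. \<Sum>k\<in>A. Top (w k) t - Top v t) \<le> subset_sum_modulus w v S"
proof -
  define M where "M = subset_sum_modulus w v S"
  have "finite A"
    using assms(3,4) by (rule finite_subset[rotated])
  then have "AE t in lborel. \<forall>k\<in>A. t \<in> {0..1} \<longrightarrow> 0 \<le> w k t \<and> w k t \<le> 1"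
    using assms(2) by (intro AE_finite_allI) (auto simp: K01_def)
  then have bound: "AE t\<in>{0..1} in lborel.
      \<bar>\<Sum>k\<in>A. Top (w k) t - Top v t\<bar> \<le> 1/2 * (\<bar>\<Sum>k\<in>A. w k t - v t\<bar> + M)"
    by (rule eventually_mono) (use abs_sum_Top_diff_le[OF assms] in \<open>auto simp: M_def\<close>)
  have "set_integrable lborel {0..1} (\<lambda>t. \<bar>\<Sum>k\<in>A. w k t - v t\<bar>)"
    using assms(1,2) by (intro set_integrable_abs set_integrable_sum set_integral_diff) (auto simp: K01_def)
  moreover have "set_integrable lborel {0..1::real} (\<lambda>t. M)"
    by (rule borel_integrable_atLeastAtMost'[OF continuous_on_const])
  ultimately have "norm1 (\<lambda>t. \<Sum>k\<in>A. Top (w k) t - Top v t)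
      \<le> 1/2 * (norm1 (\<lambda>t. \<Sum>k\<in>A. w k t - v t) + M)"
    using norm1_le_set_integral[OF _ bound] by (simp add: norm1_def set_integral_const)
  also have "\<dots> \<le> M"
    using norm1_le_subset_sum_modulus[OF assms(3,4)] by (simp add: M_def)
  finally show ?thesis
    unfolding M_def .
qed

lemma subset_sum_modulus_Top_le:
  assumes "v \<in> K01" and "\<And>k. w k \<in> K01" and "finite S"
  shows "subset_sum_modulus (\<lambda>k. Top (w k)) (Top v) S \<le> subset_sum_modulus w v S"
  unfolding subset_sum_modulus_def[of "\<lambda>k. Top (w k)"]
  using assms norm1_sum_Top_diff_le_subset_sum_modulus by (subst Max_le_iff) auto

theorem proposition6p2:
  fixes n :: nat and v :: "real \<Rightarrow> real" and u :: "nat \<Rightarrow> real \<Rightarrow> real"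
  assumes "v \<in> K01" and "\<And>i. u i \<in> K01"
  shows "limsup (\<lambda>i. ereal (Max ((\<lambda>A. norm1 (\<lambda>t. \<Sum>k\<in>A. Top (u (i + k)) t - Top v t))
                                   ` Pow {1..n})))
       \<le> limsup (\<lambda>i. ereal (Max ((\<lambda>A. norm1 (\<lambda>t. \<Sum>k\<in>A. u (i + k) t - v t))
                                   ` Pow {1..n})))"
proof (intro Limsup_mono always_eventually allI)
  fix i
  show "ereal (Max ((\<lambda>A. norm1 (\<lambda>t. \<Sum>k\<in>A. Top (u (i + k)) t - Top v t)) ` Pow {1..n}))
      \<le> ereal (Max ((\<lambda>A. norm1 (\<lambda>t. \<Sum>k\<in>A. u (i + k) t - v t)) ` Pow {1..n}))"
    using subset_sum_modulus_Top_le[of v "\<lambda>k. u (i + k)" "{1..n}"] assms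
    by (simp add: subset_sum_modulus_def)
qed

end
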